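(* Assume $\Omega_{\mathrm O},\Omega_{\mathrm I}$ satisfy the standing assumptions (1)–(5). For every $\psi\in\boldsymbol A_\Omega$ with $\langle\psi\rangle_{[0,1]}\notin\operatorname{int}\operatorname{conv}\Omega_{\mathrm I}$ there exists $t\in(0,1)$ such that, with $I_+=[0,t]$ and $I_-=[t,1]$, $$\big[\langle\psi\rangle_{I_+},\langle\psi\rangle_{I_-}\big]\subset\operatorname{cl}\Omega_{\mathrm O}\setminus\operatorname{int}\operatorname{conv}\Omega_{\mathrm I}.$$
   Context: Let $d\ge1$. $\Omega_{\mathrm O}\subset\mathbb R^d$ is a nonempty open strictly convex set and $\Omega_{\mathrm I}\subset\Omega_{\mathrm O}$ is a closed set; $\operatorname{conv}$, $\operatorname{int}$, $\operatorname{cl}$, $\partial$ denote convex hull, interior, closure, boundary. A ray is a set $\{x+te: t\ge0\}$ with $e\ne0$. The standing assumptions are: (1) $\partial\operatorname{conv}\Omega_{\mathrm I}$ contains no rays; (2) $\operatorname{cl}\operatorname{conv}\Omega_{\mathrm I}\subset\Omega_{\mathrm O}$; (3) $\operatorname{int}\operatorname{conv}\Omega_{\mathrm I}\ne\varnothing$ and $\Omega_{\mathrm O}$ and $\operatorname{conv}\Omega_{\mathrm I}$ have congruent maximal inscribed cones (the set of directions $e$ such that some ray $\{x+te:t\ge0\}$ is contained in the set is the same for both sets); (4) the set $(\operatorname{int}\operatorname{conv}\Omega_{\mathrm I})\setminus\Omega_{\mathrm I}$ is a locally finite union of its connected components $\omega_j$ (every bounded subset of $\mathbb R^d$ meets only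 finitely many $\omega_j$); (5) for every $j$ there is a supporting hyperplane $L_j$ to $\operatorname{conv}\Omega_{\mathrm I}$ that contains $E_j:=\partial\omega_j\setminus\Omega_{\mathrm I}$. Set $\Omega=\operatorname{cl}\Omega_{\mathrm O}\setminus\Omega_{\mathrm I}$. For a set $E$ of positive finite measure, $\langle\psi\rangle_E=|E|^{-1}\int_E\psi$ (coordinate-wise). $\boldsymbol{A}_\Omega=\{\psi\in L_1([0,1],\mathbb R^d): \psi(x)\in\partial\Omega_{\mathrm O}\ \forall x\in[0,1],\ \langle\psi\rangle_J\notin\Omega_{\mathrm I}\text{ for every subinterval }J\subset[0,1]\}$. $[P,Q]$ denotes the closed segment joining $P$ and $Q$. *)

theory Defs
  imports "HOL-Analysis.Analysis"
begin

definition strictly_convex :: "'a::euclidean_space set \<Rightarrow> bool" where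
  "strictly_convex S \<longleftrightarrow> convex S \<and>
     (\<forall>x\<in>closure S. \<forall>y\<in>closure S. x \<noteq> y \<longrightarrow> open_segment x y \<subseteq> interior S)"

definition ray :: "'a::euclidean_space \<Rightarrow> 'a \<Rightarrow> 'a set" where
  "ray x e = {x + t *\<^sub>R e | t. t \<ge> 0}"

definition ray_dirs :: "'a::euclidean_space set \<Rightarrow> 'a set" where
  "ray_dirs S = {e. e \<noteq> 0 \<and> (\<exists>x. ray x e \<subseteq> S)}"

definition supporting_hyperplane :: "'a::euclidean_space set \<Rightarrow> 'a set \<Rightarrow> bool" where
  "supporting_hyperplane C L \<longleftrightarrow>
     (\<exists>a b. a \<noteq> 0 \<and> L = {x. a \<bullet> x = b} \<and> (\<forall>y\<in>C. a \<bullet> y \<le> b)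
            \<and> (\<exists>x\<in>closure C. a \<bullet> x = b))"

definition avg :: "real set \<Rightarrow> (real \<Rightarrow> 'a::euclidean_space) \<Rightarrow> 'a" where
  "avg E \<psi> = (1 / measure lebesgue E) *\<^sub>R integral E \<psi>"

definition standing_assumptions :: "'a::euclidean_space set \<Rightarrow> 'a set \<Rightarrow> bool" where
  "standing_assumptions \<Omega>O \<Omega>I \<longleftrightarrow>
     \<Omega>O \<noteq> {} \<and> open \<Omega>O \<and> strictly_convex \<Omega>O \<and> closed \<Omega>I \<and> \<Omega>I \<subseteq> \<Omega>O \<and>
     \<comment> \<open>(1)\<close>
     (\<forall>x e. e \<noteq> 0 \<longrightarrow> \<not> ray x e \<subseteq> frontier (convex hull \<Omega>I)) \<and>
     \<comment> \<open>(2)\<close>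
     closure (convex hull \<Omega>I) \<subseteq> \<Omega>O \<and>
     \<comment> \<open>(3)\<close>
     interior (convex hull \<Omega>I) \<noteq> {} \<and> ray_dirs \<Omega>O = ray_dirs (convex hull \<Omega>I) \<and>
     \<comment> \<open>(4)\<close>
     (\<forall>B. bounded B \<longrightarrow>
        finite {\<omega> \<in> components (interior (convex hull \<Omega>I) - \<Omega>I). \<omega> \<inter> B \<noteq> {}}) \<and>
     \<comment> \<open>(5)\<close>
     (\<forall>\<omega> \<in> components (interior (convex hull \<Omega>I) - \<Omega>I).
        \<exists>L. supporting_hyperplane (convex hull \<Omega>I) L \<and> frontier \<omega> - \<Omega>I \<subseteq> L)"

definition A_class :: "'a::euclidean_space set \<Rightarrow> 'a set \<Rightarrow> (real \<Rightarrow> 'a) set" where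
  "A_class \<Omega>O \<Omega>I = {\<psi>. \<psi> absolutely_integrable_on {0..1} \<and>
      (\<forall>x\<in>{0..1}. \<psi> x \<in> frontier \<Omega>O) \<and>
      (\<forall>a b. 0 \<le> a \<and> a < b \<and> b \<le> 1 \<longrightarrow> avg {a..b} \<psi> \<notin> \<Omega>I)}"

end

theory Submission
  imports Defs
begin

text \<open>Suppose that for every \<open>t\<close> the segment between the averages of \<open>\<psi>\<close> over \<open>[0,t]\<close> and
  \<open>[t,1]\<close> met \<open>K = int conv \<Omega>I\<close>. The total average \<open>x0 \<notin> K\<close> is a convex combination of the two
  ends, so separating \<open>x0\<close> from \<open>K\<close> and using continuity in \<open>t\<close> shows that either all segments
  from \<open>x0\<close> to the tail averages (over \<open>[t,1]\<close>) meet \<open>K\<close>, or all segments to the head averages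
  do; reversing time turns the second case into the first.

  In the first case the tail averages lie in one component \<open>\<omega>\<close> of \<open>K - \<Omega>I\<close>, strictly below a
  supporting hyperplane \<open>v \<bullet> x = b\<close> of \<open>conv \<Omega>I\<close> containing the frontier of \<open>\<omega>\<close> off \<open>\<Omega>I\<close>,
  while \<open>v \<bullet> x0 \<ge> b\<close>. Riesz's rising sun lemma for the primitive of \<open>v \<bullet> \<psi> - b\<close> gives a set of
  left ends \<open>\<alpha>\<close> of positive measure such that every average over \<open>[\<alpha>, \<beta>]\<close> lies below the
  hyperplane, hence by connectedness in \<open>\<omega>\<close>, and so in \<open>cl K\<close>. But \<open>\<psi>\<close> takes its values on
  \<open>\<partial>\<Omega>O\<close>, outside \<open>cl K\<close>: on a closed subset of these left ends of positive measure, \<open>\<psi>\<close> is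
  strictly separated from the convex set \<open>cl K\<close> by a hyperplane, and approximating that subset by
  finitely many intervals with ends in it shows that the separating functional integrates over
  it with the wrong sign.\<close>

lemma integral_combine_from_0:
  fixes f :: "real \<Rightarrow> 'a::euclidean_space"
  assumes "f integrable_on {0..1}" "0 \<le> a" "a \<le> b" "b \<le> 1"
  shows "integral {a..b} f = integral {0..b} f - integral {0..a} f"
proof -
  have "f integrable_on {0..b}" using assms by (intro integrable_subinterval_real[OF assms(1)]) auto
  then have "integral {0..a} f + integral {a..b} f = integral {0..b} f"
    using assms by (intro Henstock_Kurzweil_Integration.integral_combine) auto
  then show ?thesis by (simp add: algebra_simps)
qed

lemma closed_unit_Inf_mem:
  fixes S :: "real set" assumes "closed S" "S \<noteq> {}" "S \<subseteq> {0..1}" shows "Inf S \<in> S"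
  by (meson assms bdd_below_Icc bdd_below_mono closed_contains_Inf)

lemma closed_unit_Sup_mem:
  fixes S :: "real set" assumes "closed S" "S \<noteq> {}" "S \<subseteq> {0..1}" shows "Sup S \<in> S"
  by (meson assms bdd_above_Icc bdd_above_mono closed_contains_Sup)

lemma unit_Inf_le:
  fixes S :: "real set" assumes "x \<in> S" "S \<subseteq> {0..1}" shows "Inf S \<le> x"
  by (meson assms bdd_below_Icc bdd_below_mono cInf_lower)

lemma unit_Sup_ge:
  fixes S :: "real set" assumes "x \<in> S" "S \<subseteq> {0..1}" shows "x \<le> Sup S"
  by (meson assms bdd_above_Icc bdd_above_mono cSup_upper)

lemma negligible_Rats: "negligible (\<rat> :: real set)"
  by (simp add: countable_rat countable_imp_null_set_lborel negligible_iff_null_sets null_sets_completionI)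

section \<open>Approximating closed subsets of the unit interval by grid cells\<close>

abbreviation grid_interval :: "nat \<Rightarrow> nat \<Rightarrow> real set" where
  "grid_interval n j \<equiv> {real j / real n .. real (Suc j) / real n}"

text \<open>Its left end is written as the first point of \<open>A\<close>
  beyond \<open>j/n\<close>, so that the integrals over consecutive cells telescope across the gaps of \<open>A\<close>.\<close>
definition grid_cell :: "real set \<Rightarrow> nat \<Rightarrow> nat \<Rightarrow> real set" where
  "grid_cell A n j = (if A \<inter> grid_interval n j = {} then {}
     else {Inf (A \<inter> {real j / real n..}) .. Sup (A \<inter> grid_interval n j)})"

lemma grid_cell_nonempty:
  assumes A: "closed A" "A \<subseteq> {0..1}" and ne: "A \<inter> grid_interval n j \<noteq> {}"
  defines "l \<equiv> Inf (A \<inter> {real j / real n..})" and "r \<equiv> Sup (A \<inter> grid_interval n j)"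
  shows "grid_cell A n j = {l..r}" "l \<in> A" "r \<in> A" "real j / real n \<le> l" "l \<le> r"
    "r \<le> real (Suc j) / real n"
proof -
  have r: "r \<in> A \<inter> grid_interval n j"
    unfolding r_def by (rule closed_unit_Sup_mem) (use A ne in auto)
  have l: "l \<in> A \<inter> {real j / real n..}"
    unfolding l_def by (rule closed_unit_Inf_mem) (use A ne in auto)
  have "l \<le> r"
    unfolding l_def by (rule unit_Inf_le) (use A r in auto)
  then show "grid_cell A n j = {l..r}" "l \<in> A" "r \<in> A" "real j / real n \<le> l" "l \<le> r"
    "r \<le> real (Suc j) / real n"
    using r l ne by (auto simp: grid_cell_def l_def r_def)
qed

lemma grid_cell_subset_grid_interval:
  assumes "closed A" "A \<subseteq> {0..1}"
  shows "grid_cell A n j \<subseteq> grid_interval n j"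
  using grid_cell_nonempty[OF assms] by (cases "A \<inter> grid_interval n j = {}") (auto simp: grid_cell_def)

lemma grid_cell_is_interval: "\<exists>a b. grid_cell A n j = {a..b}"
proof (cases "A \<inter> grid_interval n j = {}")
  case True
  then have "grid_cell A n j = {1..0::real}" by (simp add: grid_cell_def)
  then show ?thesis by blast
qed (auto simp: grid_cell_def)

lemma grid_cell_subset_unit:
  assumes "closed A" "A \<subseteq> {0..1}" "j < n"
  shows "grid_cell A n j \<subseteq> {0..1}"
proof -
  have "real (Suc j) / real n \<le> 1" using assms(3) by (simp add: divide_le_eq_1)
  then have "grid_interval n j \<subseteq> {0..1}" by auto
  then show ?thesis using grid_cell_subset_grid_interval[OF assms(1,2), of n j] by blast
qed

lemma grid_cell_near:
  assumes "closed A" "A \<subseteq> {0..1}" "x \<in> grid_cell A n j"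
  shows "\<exists>a\<in>A. dist x a \<le> 1 / real n"
proof -
  have ne: "A \<inter> grid_interval n j \<noteq> {}"
    using assms(3) by (auto simp: grid_cell_def split: if_splits)
  note c = grid_cell_nonempty[OF assms(1,2) ne]
  let ?a = "Inf (A \<inter> {real j / real n..})"
  have "dist x ?a \<le> real (Suc j) / real n - real j / real n"
    using c assms(3) by (auto simp: dist_real_def)
  also have "\<dots> = 1 / real n" by (simp add: diff_divide_distrib[symmetric])
  finally show ?thesis using c(2) by blast
qed

lemma irrational_grid_interval:
  fixes x :: real
  assumes x: "x \<notin> \<rat>" "x \<in> {0..1}" and n: "n > 0"
  shows "x \<in> grid_interval n j \<longleftrightarrow> j = nat \<lfloor>real n * x\<rfloor>" "nat \<lfloor>real n * x\<rfloor> < n"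
proof -
  have nx: "real n * x \<notin> \<rat>"
  proof
    assume "real n * x \<in> \<rat>"
    moreover have "x = real n * x / real n" using n by simp
    ultimately show False using x(1) by (metis Rats_divide Rats_of_nat)
  qed
  then have ne: "real i \<noteq> real n * x" for i by (metis Rats_of_nat)
  have fl: "real (nat \<lfloor>real n * x\<rfloor>) = of_int \<lfloor>real n * x\<rfloor>" using x by simp
  have int: "real j < real n * x \<and> real n * x < real j + 1 \<longleftrightarrow> j = nat \<lfloor>real n * x\<rfloor>"
  proof
    assume "real j < real n * x \<and> real n * x < real j + 1"
    then have "\<lfloor>real n * x\<rfloor> = int j" by (simp add: floor_eq_iff)
    then show "j = nat \<lfloor>real n * x\<rfloor>" by simp
  next
    assume j: "j = nat \<lfloor>real n * x\<rfloor>"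
    show "real j < real n * x \<and> real n * x < real j + 1"
    proof
      have "real j \<le> real n * x" using j fl of_int_floor_le[of "real n * x"] by simp
      then show "real j < real n * x" using ne[of j] by simp
      show "real n * x < real j + 1" using j fl by linarith
    qed
  qed
  have "x \<in> grid_interval n j \<longleftrightarrow> real j \<le> real n * x \<and> real n * x \<le> real j + 1"
    using n by (simp add: divide_le_eq le_divide_eq mult.commute add.commute)
  also have "\<dots> \<longleftrightarrow> real j < real n * x \<and> real n * x < real j + 1"
    using ne[of j] ne[of "Suc j"] by auto
  finally show "x \<in> grid_interval n j \<longleftrightarrow> j = nat \<lfloor>real n * x\<rfloor>" using int by simp
  have "real n * x \<le> real n" using x by (simp add: mult_left_le)
  then have "real n * x < real n" using ne[of n] by simp
  then show "nat \<lfloor>real n * x\<rfloor> < n" using fl of_int_floor_le[of "real n * x"] by linarith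
qed

lemma sum_indicator_grid_cells:
  fixes x :: real
  assumes A: "closed A" "A \<subseteq> {0..1}" and x: "x \<notin> \<rat>" "x \<in> {0..1}" and n: "n > 0"
  shows "(\<Sum>j<n. indicator (grid_cell A n j) x) = (indicator (grid_cell A n (nat \<lfloor>real n * x\<rfloor>)) x :: real)"
proof -
  let ?J = "nat \<lfloor>real n * x\<rfloor>"
  have "x \<notin> grid_cell A n j" if "j \<noteq> ?J" for j
    using that irrational_grid_interval(1)[OF x n] grid_cell_subset_grid_interval[OF A] by blast
  then have "(\<Sum>j\<in>{..<n} - {?J}. indicator (grid_cell A n j) x) = (0::real)"
    by (intro sum.neutral) auto
  moreover have "?J < n" by (rule irrational_grid_interval(2)[OF x n])
  ultimately show ?thesis by (simp add: sum.remove[of "{..<n}" ?J])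
qed

lemma mem_grid_cell:
  fixes x :: real
  assumes A: "closed A" "A \<subseteq> {0..1}" and x: "x \<notin> \<rat>" "x \<in> A" and n: "n > 0"
  shows "x \<in> grid_cell A n (nat \<lfloor>real n * x\<rfloor>)"
proof -
  let ?J = "nat \<lfloor>real n * x\<rfloor>"
  have "x \<in> {0..1}" using x A by auto
  then have c: "x \<in> grid_interval n ?J" using irrational_grid_interval(1)[OF x(1) _ n, of ?J] by blast
  then have ne: "A \<inter> grid_interval n ?J \<noteq> {}" using x by blast
  have "Inf (A \<inter> {real ?J / real n..}) \<le> x" by (rule unit_Inf_le) (use c x A in auto)
  moreover have "x \<le> Sup (A \<inter> grid_interval n ?J)" by (rule unit_Sup_ge) (use c x A in auto)
  ultimately show ?thesis using grid_cell_nonempty(1)[OF A ne] by auto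
qed

lemma sum_indicator_grid_cells_eventually:
  fixes x :: real
  assumes A: "closed A" "A \<subseteq> {0..1}" and x: "x \<notin> \<rat>" "x \<in> {0..1}"
  shows "eventually (\<lambda>n. (\<Sum>j<n. indicator (grid_cell A n j) x) = (indicator A x :: real)) sequentially"
proof (cases "x \<in> A")
  case True
  then have "(\<Sum>j<n. indicator (grid_cell A n j) x) = (indicator A x :: real)" if "n \<ge> 1" for n
    using that sum_indicator_grid_cells[OF A x] mem_grid_cell[OF A x(1) True] by simp
  then show ?thesis by (auto simp: eventually_sequentially)
next
  case xA: False
  show ?thesis
  proof (cases "A = {}")
    case False
    then have d: "infdist x A > 0" using infdist_pos_not_in_closed[OF A(1)] xA by blast
    obtain N :: nat where N: "1 / infdist x A < real N" using reals_Archimedean2 by blast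
    have Npos: "real N > 0" using N d by (smt (verit) divide_pos_pos)
    have "x \<notin> grid_cell A n j" if "n \<ge> N" for n j
    proof
      assume "x \<in> grid_cell A n j"
      then obtain a where a: "a \<in> A" "dist x a \<le> 1 / real n" using grid_cell_near[OF A] by blast
      have "1 / real n \<le> 1 / real N" using that Npos by (simp add: frac_le)
      also have "\<dots> < infdist x A" using N d Npos by (simp add: field_simps)
      also have "infdist x A \<le> dist x a" using a(1) by (rule infdist_le)
      finally show False using a(2) by simp
    qed
    then show ?thesis using xA by (auto simp: eventually_sequentially intro!: exI[of _ N])
  qed (simp add: grid_cell_def)
qed

lemma indicator_mult_integral_subinterval:
  fixes f :: "real \<Rightarrow> real"
  assumes f: "f integrable_on {0..1}" and ab: "{a..b} \<subseteq> {0..1}"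
  shows "(\<lambda>x. indicator {a..b} x * f x) integrable_on {0..1}"
    "integral {0..1} (\<lambda>x. indicator {a..b} x * f x) = integral {a..b} f"
proof -
  have eq: "(\<lambda>x. indicator {a..b} x * f x) = (\<lambda>x. if x \<in> {a..b} then f x else 0)"
    by (auto simp: indicator_def)
  have "f integrable_on {a..b}" by (rule integrable_subinterval_real[OF f ab])
  then have "f integrable_on {a..b} \<inter> {0..1}" by (simp only: Int_absorb2[OF ab])
  then show "(\<lambda>x. indicator {a..b} x * f x) integrable_on {0..1}"
    unfolding eq integrable_restrict_Int .
  show "integral {0..1} (\<lambda>x. indicator {a..b} x * f x) = integral {a..b} f"
    unfolding eq integral_restrict_Int by (simp only: Int_absorb2[OF ab])
qed

lemma integral_grid_cells_tendsto:
  fixes f :: "real \<Rightarrow> real"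
  assumes f: "f absolutely_integrable_on {0..1}" and A: "closed A" "A \<subseteq> {0..1}"
  shows "(\<lambda>n. \<Sum>j<n. integral (grid_cell A n j) f) \<longlonglongrightarrow> integral A f" "f integrable_on A"
proof -
  have fi: "f integrable_on {0..1}" and fa: "(\<lambda>x. norm (f x)) integrable_on {0..1}"
    using f by (auto simp: absolutely_integrable_on_def)
  have cell: "(\<lambda>x. indicator (grid_cell A n j) x * f x) integrable_on {0..1}"
    "integral {0..1} (\<lambda>x. indicator (grid_cell A n j) x * f x) = integral (grid_cell A n j) f"
    if "j < n" for n j
    using grid_cell_subset_unit[OF A that] grid_cell_is_interval[of A n j]
      indicator_mult_integral_subinterval[OF fi] by auto
  text \<open>Off the null set \<open>\<rat>\<close> the cells converge pointwise to \<open>A\<close>, dominated by \<open>|f|\<close>.\<close>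
  define g where "g n x = (if x \<in> \<rat> then 0 else \<Sum>j<n. indicator (grid_cell A n j) x * f x)" for n x
  define g0 where "g0 x = (if x \<in> \<rat> then 0 else indicator A x * f x)" for x
  have g_spike: "g n x = (\<Sum>j<n. indicator (grid_cell A n j) x * f x)" if "x \<in> {0..1} - \<rat>" for n x
    using that by (simp add: g_def)
  have sum_int: "(\<lambda>x. \<Sum>j<n. indicator (grid_cell A n j) x * f x) integrable_on {0..1}" for n
    by (rule integrable_sum) (auto intro: cell)
  have int_g: "g n integrable_on {0..1}" for n
    by (rule integrable_spike[OF sum_int negligible_Rats]) (use g_spike in auto)
  have val_g: "integral {0..1} (g n) = (\<Sum>j<n. integral (grid_cell A n j) f)" for n
  proof -
    have "integral {0..1} (g n) = integral {0..1} (\<lambda>x. \<Sum>j<n. indicator (grid_cell A n j) x * f x)"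
      by (rule integral_spike[OF negligible_Rats]) (use g_spike in auto)
    also have "\<dots> = (\<Sum>j<n. integral {0..1} (\<lambda>x. indicator (grid_cell A n j) x * f x))"
      by (rule Henstock_Kurzweil_Integration.integral_sum) (auto intro: cell)
    also have "\<dots> = (\<Sum>j<n. integral (grid_cell A n j) f)"
      by (rule sum.cong) (auto simp: cell)
    finally show ?thesis .
  qed
  have restrict: "(\<lambda>x. if x \<in> A then f x else 0) x = g0 x" if "x \<in> {0..1} - \<rat>" for x
    using that by (simp add: g0_def indicator_def)
  have le: "norm (g n x) \<le> norm (f x)" if "x \<in> {0..1}" for n x
  proof (cases "x \<notin> \<rat> \<and> n > 0")
    case True
    then show ?thesis
      using that sum_indicator_grid_cells[OF A, of x n]
      by (simp add: g_def indicator_def abs_mult flip: sum_distrib_right)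
  qed (auto simp: g_def)
  have conv: "(\<lambda>n. g n x) \<longlonglongrightarrow> g0 x" if "x \<in> {0..1}" for x
  proof (cases "x \<in> \<rat>")
    case False
    have "eventually (\<lambda>n. g n x = g0 x) sequentially"
      using sum_indicator_grid_cells_eventually[OF A False that]
      by eventually_elim (simp add: g_def g0_def False flip: sum_distrib_right)
    then show ?thesis by (rule tendsto_eventually)
  qed (simp add: g_def g0_def)
  have dc: "g0 integrable_on {0..1}" "(\<lambda>n. integral {0..1} (g n)) \<longlonglongrightarrow> integral {0..1} g0"
    using dominated_convergence[of g "{0..1}" "\<lambda>x. norm (f x)" g0] int_g fa le conv by auto
  have "(\<lambda>x. if x \<in> A then f x else 0) integrable_on {0..1}"
    by (rule integrable_spike[OF dc(1) negligible_Rats]) (use restrict in auto)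
  then show "f integrable_on A" using A by (simp add: integrable_restrict_Int Int_absorb2)
  have "integral {0..1} g0 = integral {0..1} (\<lambda>x. if x \<in> A then f x else 0)"
    by (rule integral_spike[OF negligible_Rats]) (use restrict in auto)
  also have "\<dots> = integral A f" unfolding integral_restrict_Int using A by (simp add: Int_absorb2)
  finally show "(\<lambda>n. \<Sum>j<n. integral (grid_cell A n j) f) \<longlonglongrightarrow> integral A f"
    using dc(2) unfolding val_g by simp
qed

lemma integral_closed_nonpos:
  fixes f :: "real \<Rightarrow> real"
  assumes f: "f absolutely_integrable_on {0..1}" and A: "closed A" "A \<subseteq> {0..1}"
    and nonpos: "\<And>a b. a \<in> A \<Longrightarrow> b \<in> A \<Longrightarrow> a \<le> b \<Longrightarrow> integral {a..b} f \<le> 0"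
  shows "integral A f \<le> 0"
proof -
  have "integral (grid_cell A n j) f \<le> 0" for n j
  proof (cases "A \<inter> grid_interval n j = {}")
    case False
    note c = grid_cell_nonempty[OF A False]
    show ?thesis unfolding c(1) by (rule nonpos[OF c(2,3,5)])
  qed (simp add: grid_cell_def)
  then have "(\<Sum>j<n. integral (grid_cell A n j) f) \<le> 0" for n
    by (simp add: sum_nonpos)
  then show ?thesis
    using LIMSEQ_le_const2[OF integral_grid_cells_tendsto(1)[OF f A]] by blast
qed

text \<open>The hypothesis \<open>flat\<close> says that the primitive of \<open>f\<close> takes equal values at the two ends of
  every gap of \<open>A\<close>.\<close>
lemma integral_grid_cell_telescope:
  fixes f :: "real \<Rightarrow> real"
  assumes f: "f integrable_on {0..1}" and A: "closed A" "A \<subseteq> {0..1}" and j: "j < n"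
    and flat: "\<And>x. x \<in> {0..1} \<Longrightarrow> A \<inter> {..x} \<noteq> {} \<Longrightarrow>
       integral {0..Sup (A \<inter> {..x})} f = integral {0..Inf (A \<inter> {x..})} f"
  shows "integral (grid_cell A n j) f =
    integral {0..Inf (A \<inter> {real (Suc j) / real n..})} f - integral {0..Inf (A \<inter> {real j / real n..})} f"
proof (cases "A \<inter> grid_interval n j = {}")
  case True
  have "real j / real n \<le> real (Suc j) / real n" by (simp add: divide_right_mono)
  then have "A \<inter> {real j / real n..} = A \<inter> {real (Suc j) / real n..}"
    using True by fastforce
  then show ?thesis using True by (simp add: grid_cell_def)
next
  case False
  note c = grid_cell_nonempty[OF A False]
  let ?l = "Inf (A \<inter> {real j / real n..})" and ?r = "Sup (A \<inter> grid_interval n j)"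
  let ?x = "real (Suc j) / real n"
  have x01: "?x \<in> {0..1}" using j by (auto simp: divide_le_eq_1)
  have "Sup (A \<inter> {..?x}) = ?r"
  proof (rule cSup_eq_maximum)
    show "?r \<in> A \<inter> {..?x}" using c by auto
    show "y \<le> ?r" if "y \<in> A \<inter> {..?x}" for y
    proof (cases "real j / real n \<le> y")
      case True
      then show ?thesis using that A by (intro unit_Sup_ge) auto
    qed (use c in linarith)
  qed
  moreover have "A \<inter> {..?x} \<noteq> {}" using c by auto
  ultimately have "integral {0..?r} f = integral {0..Inf (A \<inter> {?x..})} f"
    using flat[OF x01] by simp
  moreover have "0 \<le> ?l" using c(4) by (smt (verit) divide_nonneg_nonneg of_nat_0_le_iff)
  then have "integral {?l..?r} f = integral {0..?r} f - integral {0..?l} f"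
    using c x01 by (intro integral_combine_from_0[OF f]) auto
  ultimately show ?thesis unfolding c(1) by simp
qed

lemma integral_closed_flat_gaps:
  fixes f :: "real \<Rightarrow> real"
  assumes f: "f absolutely_integrable_on {0..1}" and A: "closed A" "A \<subseteq> {0..1}" "1 \<in> A"
    and flat: "\<And>x. x \<in> {0..1} \<Longrightarrow> A \<inter> {..x} \<noteq> {} \<Longrightarrow>
       integral {0..Sup (A \<inter> {..x})} f = integral {0..Inf (A \<inter> {x..})} f"
  shows "integral A f = integral {0..1} f - integral {0..Inf A} f"
proof -
  define F where "F x = integral {0..Inf (A \<inter> {x..})} f" for x
  have fi: "f integrable_on {0..1}" using f by (auto simp: absolutely_integrable_on_def)
  have "(\<Sum>j<n. integral (grid_cell A n j) f) = F (real n / real n) - F (real 0 / real n)" for n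
  proof -
    have "(\<Sum>j<n. integral (grid_cell A n j) f) = (\<Sum>j<n. F (real (Suc j) / real n) - F (real j / real n))"
      unfolding F_def using integral_grid_cell_telescope[OF fi A(1,2) _ flat] by (intro sum.cong) auto
    also have "\<dots> = F (real n / real n) - F (real 0 / real n)" by (rule sum_lessThan_telescope)
    finally show ?thesis .
  qed
  moreover have "A \<inter> {1..} = {1}" "A \<inter> {0..} = A" using A by auto
  ultimately have "(\<Sum>j<n. integral (grid_cell A n j) f) = integral {0..1} f - integral {0..Inf A} f"
    if "n > 0" for n
    using that by (simp add: F_def)
  then have "eventually (\<lambda>n. (\<Sum>j<n. integral (grid_cell A n j) f) =
      integral {0..1} f - integral {0..Inf A} f) sequentially"
    unfolding eventually_sequentially by (intro exI[of _ 1]) simp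
  then have "(\<lambda>n. \<Sum>j<n. integral (grid_cell A n j) f) \<longlonglongrightarrow> integral {0..1} f - integral {0..Inf A} f"
    by (rule tendsto_eventually)
  with integral_grid_cells_tendsto(1)[OF f A(1,2)] show ?thesis by (rule LIMSEQ_unique)
qed

section \<open>The rising sun lemma\<close>

definition right_records :: "(real \<Rightarrow> real) \<Rightarrow> real set" where
  "right_records G = {a \<in> {0..1}. \<forall>u\<in>{a..1}. G u \<le> G a}"

lemma right_records_subset: "right_records G \<subseteq> {0..1}"
  by (auto simp: right_records_def)

lemma one_in_right_records: "1 \<in> right_records G"
  by (auto simp: right_records_def)

lemma closed_right_records:
  assumes G: "continuous_on {0..1} G"
  shows "closed (right_records G)"
  unfolding closed_sequential_limits
proof (intro allI impI, elim conjE)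
  fix x l assume xs: "\<forall>n. x n \<in> right_records G" and lim: "x \<longlonglongrightarrow> l"
  have x01: "x n \<in> {0..1}" for n using xs by (auto simp: right_records_def)
  then have l01: "l \<in> {0..1}"
    using closed_sequentially[of "{0..1::real}"] lim by blast
  have Glim: "(\<lambda>n. G (x n)) \<longlonglongrightarrow> G l"
    by (rule continuous_on_tendsto_compose[OF G lim l01]) (use x01 in auto)
  have "G u \<le> G l" if u: "u \<in> {l..1}" for u
  proof (cases "u = l")
    case False
    then have u: "u \<in> {l<..1}" using u by auto
    have "eventually (\<lambda>n. x n < u) sequentially"
      using lim u by (simp add: order_tendstoD(2))
    then have "eventually (\<lambda>n. G u \<le> G (x n)) sequentially"
      by eventually_elim (use xs u in \<open>auto simp: right_records_def\<close>)
    then show ?thesis using Glim by (simp add: tendsto_lowerbound)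
  qed simp
  then show "l \<in> right_records G" using l01 by (simp add: right_records_def)
qed

lemma right_records_max:
  assumes G: "continuous_on {0..1} G" and w: "w \<in> {0..1}"
  obtains x where "x \<in> {w..1}" "x \<in> right_records G" "\<forall>u\<in>{w..1}. G u \<le> G x"
proof -
  have "continuous_on {w..1} G" by (rule continuous_on_subset[OF G]) (use w in auto)
  then obtain x where x: "x \<in> {w..1}" "\<forall>u\<in>{w..1}. G u \<le> G x"
    using continuous_attains_sup[of "{w..1}" G] w by auto
  then have "x \<in> right_records G" using w by (auto simp: right_records_def)
  then show ?thesis using x that by blast
qed

lemma right_records_gap:
  assumes G: "continuous_on {0..1} G" and x: "x \<in> {0..1}" and ne: "right_records G \<inter> {..x} \<noteq> {}"
  shows "G (Sup (right_records G \<inter> {..x})) = G (Inf (right_records G \<inter> {x..}))"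
proof -
  let ?R = "right_records G"
  let ?l = "Sup (?R \<inter> {..x})" and ?p = "Inf (?R \<inter> {x..})"
  have R: "closed ?R" "?R \<subseteq> {0..1}" using closed_right_records[OF G] right_records_subset by auto
  have l: "?l \<in> ?R \<inter> {..x}" by (rule closed_unit_Sup_mem) (use R ne in auto)
  have "1 \<in> ?R \<inter> {x..}" using one_in_right_records x by auto
  then have p: "?p \<in> ?R \<inter> {x..}" by (intro closed_unit_Inf_mem) (use R in auto)
  have l01: "?l \<in> {0..1}" and p1: "?p \<le> 1" using l p R by auto
  have "G ?p \<le> G ?l" using l p p1 by (auto simp: right_records_def)
  moreover have "\<not> G ?p < G ?l"
  proof
    assume lt: "G ?p < G ?l"
    then have lp: "?l < ?p" using l p by (cases "?l = ?p") auto
    obtain d where d: "d > 0" "\<And>y. y \<in> {0..1} \<Longrightarrow> dist y ?l < d \<Longrightarrow> dist (G y) (G ?l) < G ?l - G ?p"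
      using G l01 lt unfolding continuous_on_iff by (metis diff_gt_0_iff_gt)
    define w where "w = min (?l + d/2) ((?l + ?p)/2)"
    have w12: "?l < w" "w < ?p" "w \<le> ?l + d/2" using d(1) lp by (auto simp: w_def min_less_iff_disj)
    then have w: "?l < w" "w < ?p" "w \<in> {0..1}" "dist w ?l < d"
      using d(1) l01 p1 by (auto simp: dist_real_def)
    then have Gw: "G ?p < G w" using d(2)[of w] by (auto simp: dist_real_def)
    obtain x' where x': "x' \<in> {w..1}" "x' \<in> ?R" "\<forall>u\<in>{w..1}. G u \<le> G x'"
      using right_records_max[OF G w(3)] by blast
    show False
    proof (cases "x' \<le> x")
      case True
      then have "x' \<le> ?l" using x' R by (intro unit_Sup_ge) auto
      then show False using x' w by auto
    next
      case False
      then have "?p \<le> x'" using x' R by (intro unit_Inf_le) auto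
      then have "G x' \<le> G ?p" using p x' by (auto simp: right_records_def)
      then show False using x' w Gw by force
    qed
  qed
  ultimately show ?thesis by simp
qed

lemma continuous_on_primitive:
  fixes g :: "real \<Rightarrow> real"
  assumes "g integrable_on {0..1}" "\<And>x. x \<in> {0..1} \<Longrightarrow> integral {0..x} g = G x"
  shows "continuous_on {0..1} G"
  using indefinite_integral_continuous_1[OF assms(1)] continuous_on_eq assms(2) by blast

lemma non_negligible_right_records:
  fixes g :: "real \<Rightarrow> real"
  assumes g: "g absolutely_integrable_on {0..1}"
    and G: "\<And>x. x \<in> {0..1} \<Longrightarrow> integral {0..x} g = G x"
    and t: "t \<in> {0..1}" "G 1 < G t"
  shows "\<not> negligible (right_records G)"
proof
  let ?A = "right_records G"
  assume neg: "negligible ?A"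
  have Gc: "continuous_on {0..1} G"
    using continuous_on_primitive G g by (auto simp: absolutely_integrable_on_def)
  have A: "closed ?A" "?A \<subseteq> {0..1}" "1 \<in> ?A"
    using closed_right_records[OF Gc] right_records_subset one_in_right_records by auto
  obtain x1 where x1: "x1 \<in> ?A" "\<forall>u\<in>{0..1}. G u \<le> G x1"
    using right_records_max[OF Gc, of 0] by auto
  have p: "Inf ?A \<in> ?A" "Inf ?A \<le> x1" using A x1(1) closed_unit_Inf_mem unit_Inf_le by blast+
  have "G x1 \<le> G (Inf ?A)" using p x1(1) A(2) by (auto simp: right_records_def)
  then have G1p: "G 1 < G (Inf ?A)" using t x1(2) by force
  have GA: "integral {0..a} g = G a" if "a \<in> ?A" for a using that A(2) G by blast
  have flat: "integral {0..Sup (?A \<inter> {..x})} g = integral {0..Inf (?A \<inter> {x..})} g"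
    if x: "x \<in> {0..1}" and ne: "?A \<inter> {..x} \<noteq> {}" for x
  proof -
    have "Sup (?A \<inter> {..x}) \<in> ?A" using closed_unit_Sup_mem[of "?A \<inter> {..x}"] A ne by auto
    moreover have "Inf (?A \<inter> {x..}) \<in> ?A"
      using closed_unit_Inf_mem[of "?A \<inter> {x..}"] A x by auto
    ultimately show ?thesis using right_records_gap[OF Gc x ne] by (simp add: GA)
  qed
  have "integral ?A g = G 1 - G (Inf ?A)"
    using integral_closed_flat_gaps[OF g A flat] GA A(3) p(1) by simp
  moreover have "integral ?A g = 0" using neg by (rule integral_negligible)
  ultimately show False using G1p by simp
qed

text \<open>Riesz's rising sun lemma in integral form; the tilt \<open>e\<close> makes the records strict.\<close>
lemma non_negligible_strict_right_records:
  fixes h :: "real \<Rightarrow> real"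
  assumes h: "h absolutely_integrable_on {0..1}"
    and h01: "0 \<le> integral {0..1} h" and t: "t \<in> {0<..<1}" "integral {0..1} h < integral {0..t} h"
  obtains S where "S \<in> sets lebesgue" "S \<subseteq> {0<..<1}" "\<not> negligible S"
    "\<And>\<alpha> u. \<alpha> \<in> S \<Longrightarrow> u \<in> {\<alpha><..1} \<Longrightarrow> integral {0..u} h < integral {0..\<alpha>} h"
proof -
  define H where "H x = integral {0..x} h" for x
  define e where "e = (H t - H 1) / 2"
  have e: "e > 0" using t by (simp add: e_def H_def)
  define G where "G x = H x + e * x" for x
  have hi: "h integrable_on {0..1}" using h by (simp add: absolutely_integrable_on_def)
  have g: "(\<lambda>s. h s + e) absolutely_integrable_on {0..1}"
    by (rule set_integral_add(1)[OF h]) simp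
  have G: "integral {0..x} (\<lambda>s. h s + e) = G x" if "x \<in> {0..1}" for x
  proof -
    have "h integrable_on {0..x}" using that by (intro integrable_subinterval_real[OF hi]) auto
    then have "integral {0..x} (\<lambda>s. h s + e) = integral {0..x} h + integral {0..x} (\<lambda>s. e)"
      by (intro Henstock_Kurzweil_Integration.integral_add) auto
    then show ?thesis using that by (simp add: G_def H_def mult.commute)
  qed
  let ?A = "right_records G"
  have "H t - H 1 = 2 * e" by (simp add: e_def)
  then have "G t - G 1 = e * (1 + t)" by (simp add: G_def algebra_simps)
  then have "G 1 < G t" using e t(1) by (smt (verit) greaterThanLessThan_iff mult_pos_pos)
  then have neg: "\<not> negligible ?A" using non_negligible_right_records[OF g G, of t] t(1) by auto
  have "G 0 < G 1" using h01 e by (simp add: G_def H_def)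
  then have "0 \<notin> ?A" unfolding right_records_def by (metis (no_types, lifting) atLeastAtMost_iff mem_Collect_eq not_le zero_le_one order_refl)
  then have sub: "?A - {1} \<subseteq> {0<..<1}" using right_records_subset by fastforce
  have Gc: "continuous_on {0..1} G" by (rule continuous_on_primitive[OF _ G]) (use g in \<open>auto simp: absolutely_integrable_on_def\<close>)
  have "closed ?A" by (rule closed_right_records[OF Gc])
  then have meas: "?A - {1} \<in> sets lebesgue" by auto
  have "\<not> negligible (?A - {1})"
    using neg negligible_insert[of 1 "?A - {1}"] negligible_subset[of "insert 1 (?A - {1})" ?A] by blast
  moreover have "integral {0..u} h < integral {0..\<alpha>} h" if "\<alpha> \<in> ?A - {1}" "u \<in> {\<alpha><..1}" for \<alpha> u
  proof -
    have "G u \<le> G \<alpha>" using that by (auto simp: right_records_def)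
    moreover have "e * \<alpha> < e * u" using e that by simp
    ultimately show ?thesis by (simp add: G_def H_def)
  qed
  ultimately show ?thesis using that meas sub by blast
qed

lemma integral_inner_minus_const:
  fixes \<psi> :: "real \<Rightarrow> 'a::euclidean_space"
  assumes \<psi>: "\<psi> integrable_on {x..y}" and xy: "x < y"
  shows "integral {x..y} (\<lambda>s. a \<bullet> \<psi> s - c) = (y - x) * (a \<bullet> avg {x..y} \<psi> - c)"
proof -
  have "(\<lambda>s. a \<bullet> \<psi> s) integrable_on {x..y}"
    using integrable_linear[OF \<psi> bounded_linear_inner_right] by (simp add: o_def)
  then have "integral {x..y} (\<lambda>s. a \<bullet> \<psi> s - c) = integral {x..y} (\<lambda>s. a \<bullet> \<psi> s) - integral {x..y} (\<lambda>s. c)"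
    by (rule Henstock_Kurzweil_Integration.integral_diff[OF _ integrable_const_ivl])
  also have "\<dots> = a \<bullet> integral {x..y} \<psi> - (y - x) * c"
    using integral_linear[OF \<psi> bounded_linear_inner_right] xy by (simp add: o_def)
  also have "integral {x..y} \<psi> = (y - x) *\<^sub>R avg {x..y} \<psi>" using xy by (simp add: avg_def)
  finally show ?thesis by (simp add: algebra_simps)
qed

lemma integral_primitive_inner_minus_const:
  fixes \<psi> :: "real \<Rightarrow> 'a::euclidean_space"
  assumes \<psi>: "\<psi> integrable_on {0..1}" and xy: "0 \<le> x" "x < y" "y \<le> 1"
  shows "integral {0..y} (\<lambda>s. v \<bullet> \<psi> s - b) - integral {0..x} (\<lambda>s. v \<bullet> \<psi> s - b) =
    (y - x) * (v \<bullet> avg {x..y} \<psi> - b)"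
proof -
  have "(\<lambda>s. v \<bullet> \<psi> s) integrable_on {0..1}"
    using integrable_linear[OF \<psi> bounded_linear_inner_right] by (simp add: o_def)
  then have "(\<lambda>s. v \<bullet> \<psi> s - b) integrable_on {0..1}" by (intro integrable_diff integrable_const_ivl)
  moreover have "\<psi> integrable_on {x..y}" using xy by (intro integrable_subinterval_real[OF \<psi>]) auto
  ultimately show ?thesis
    using integral_combine_from_0[of "\<lambda>s. v \<bullet> \<psi> s - b" x y] integral_inner_minus_const[of \<psi> x y v b] xy
    by simp
qed

lemma avg_eq_primitive:
  fixes \<psi> :: "real \<Rightarrow> 'a::euclidean_space"
  assumes "\<psi> integrable_on {0..1}" "0 \<le> a" "a < b" "b \<le> 1"
  shows "avg {a..b} \<psi> = (1 / (b - a)) *\<^sub>R (integral {0..b} \<psi> - integral {0..a} \<psi>)"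
  using integral_combine_from_0[of \<psi> a b] assms by (simp add: avg_def)

lemma avg_split:
  fixes \<psi> :: "real \<Rightarrow> 'a::euclidean_space"
  assumes "\<psi> integrable_on {0..1}" "t \<in> {0<..<1}"
  shows "avg {0..1} \<psi> = t *\<^sub>R avg {0..t} \<psi> + (1 - t) *\<^sub>R avg {t..1} \<psi>"
proof -
  have "t *\<^sub>R avg {0..t} \<psi> = integral {0..t} \<psi>" using assms(2) by (simp add: avg_def)
  moreover have "(1 - t) *\<^sub>R avg {t..1} \<psi> = integral {0..1} \<psi> - integral {0..t} \<psi>"
    using avg_eq_primitive[OF assms(1), of t 1] assms(2) by simp
  ultimately show ?thesis by (simp add: avg_def)
qed

lemma continuous_on_avg_right_end:
  fixes \<psi> :: "real \<Rightarrow> 'a::euclidean_space"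
  assumes "\<psi> integrable_on {0..1}" "0 \<le> a"
  shows "continuous_on {a<..1} (\<lambda>u. avg {a..u} \<psi>)"
proof -
  have "continuous_on {a<..1} (\<lambda>u. (1 / (u - a)) *\<^sub>R (integral {0..u} \<psi> - integral {0..a} \<psi>))"
    using assms
    by (intro continuous_intros continuous_on_subset[OF indefinite_integral_continuous_1]) auto
  then show ?thesis
    by (rule continuous_on_eq) (use avg_eq_primitive[OF assms(1)] assms(2) in auto)
qed

lemma continuous_on_avg_left_end:
  fixes \<psi> :: "real \<Rightarrow> 'a::euclidean_space"
  assumes "\<psi> integrable_on {0..1}"
  shows "continuous_on {0..<1} (\<lambda>t. avg {t..1} \<psi>)"
proof -
  have "continuous_on {0..<1} (\<lambda>t. (1 / (1 - t)) *\<^sub>R (integral {0..1} \<psi> - integral {0..t} \<psi>))"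
    using assms
    by (intro continuous_intros continuous_on_subset[OF indefinite_integral_continuous_1]) auto
  then show ?thesis
    by (rule continuous_on_eq) (use avg_eq_primitive[OF assms(1)] in auto)
qed

lemma avg_in_closed_convex:
  fixes \<psi> :: "real \<Rightarrow> 'a::euclidean_space"
  assumes D: "closed D" "convex D" and ab: "a < b" and \<psi>: "\<psi> integrable_on {a..b}"
    and in_D: "\<And>s. s \<in> {a..b} \<Longrightarrow> \<psi> s \<in> D"
  shows "avg {a..b} \<psi> \<in> D"
proof (rule ccontr)
  assume "avg {a..b} \<psi> \<notin> D"
  then obtain v c where vc: "v \<bullet> avg {a..b} \<psi> < c" "\<forall>x\<in>D. v \<bullet> x > c"
    using separating_hyperplane_closed_point[OF D(2,1)] by blast
  have "(\<lambda>s. v \<bullet> \<psi> s) integrable_on {a..b}"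
    using integrable_linear[OF \<psi> bounded_linear_inner_right] by (simp add: o_def)
  then have "(\<lambda>s. v \<bullet> \<psi> s - c) integrable_on {a..b}" by (intro integrable_diff integrable_const_ivl)
  then have "0 \<le> integral {a..b} (\<lambda>s. v \<bullet> \<psi> s - c)"
    using vc(2) in_D by (intro integral_nonneg) (auto intro: less_imp_le)
  then show False using integral_inner_minus_const[OF \<psi> ab] vc(1) ab
    by (simp add: zero_le_mult_iff)
qed

lemma has_integral_reflect_unit:
  fixes \<psi> :: "real \<Rightarrow> 'a::euclidean_space"
  assumes "(\<psi> has_integral i) {a..b}"
  shows "((\<lambda>s. \<psi> (1 - s)) has_integral i) {1 - b..1 - a}"
proof -
  have "((\<lambda>r. \<psi> (r + 1)) has_integral i) {a - 1..b - 1}"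
    by (simp add: assms has_integral_shift_real_ivl)
  then show ?thesis
    using has_integral_reflect_real[of "\<lambda>x. \<psi> (x + 1)" i "b - 1" "a - 1"] by simp
qed

lemma avg_reflect:
  fixes \<psi> :: "real \<Rightarrow> 'a::euclidean_space"
  assumes "\<psi> integrable_on {0..1}" "0 \<le> a" "a < b" "b \<le> 1"
  shows "avg {a..b} (\<lambda>s. \<psi> (1 - s)) = avg {1 - b..1 - a} \<psi>"
proof -
  have "\<psi> integrable_on {1 - b..1 - a}" using assms by (intro integrable_subinterval_real[OF assms(1)]) auto
  then have "((\<lambda>s. \<psi> (1 - s)) has_integral integral {1 - b..1 - a} \<psi>) {a..b}"
    using has_integral_reflect_unit[of \<psi> _ "1 - b" "1 - a"] by (simp add: has_integral_integral)
  then show ?thesis using assms by (simp add: avg_def integral_unique)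
qed

lemma A_class_reflect:
  assumes "\<psi> \<in> A_class \<Omega>O \<Omega>I"
  shows "(\<lambda>s. \<psi> (1 - s)) \<in> A_class \<Omega>O \<Omega>I"
proof -
  have \<psi>: "\<psi> absolutely_integrable_on {0..1}"
    and "\<And>a b. 0 \<le> a \<Longrightarrow> a < b \<Longrightarrow> b \<le> 1 \<Longrightarrow> avg {a..b} \<psi> \<notin> \<Omega>I"
    and "\<forall>x\<in>{0..1}. \<psi> x \<in> frontier \<Omega>O"
    using assms unfolding A_class_def by auto
  moreover have "(\<lambda>s. \<psi> (1 - s)) absolutely_integrable_on {0..1}"
    using \<psi> unfolding absolutely_integrable_on_def integrable_on_def
    using has_integral_reflect_unit[of \<psi> _ 0 1] has_integral_reflect_unit[of "\<lambda>s. norm (\<psi> s)" _ 0 1]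
    by auto
  moreover have "avg {a..b} (\<lambda>s. \<psi> (1 - s)) = avg {1 - b..1 - a} \<psi>" if "0 \<le> a" "a < b" "b \<le> 1" for a b
    using \<psi> that by (intro avg_reflect) (auto simp: absolutely_integrable_on_def)
  ultimately show ?thesis unfolding A_class_def by auto
qed

lemma A_class_avg_in_closure:
  assumes "convex \<Omega>O" "\<psi> \<in> A_class \<Omega>O \<Omega>I" "0 \<le> a" "a < b" "b \<le> 1"
  shows "avg {a..b} \<psi> \<in> closure \<Omega>O"
proof (rule avg_in_closed_convex)
  have \<psi>: "\<psi> integrable_on {0..1}" and fr: "\<forall>s\<in>{0..1}. \<psi> s \<in> frontier \<Omega>O"
    using assms(2) by (auto simp: A_class_def absolutely_integrable_on_def)
  show "\<psi> integrable_on {a..b}"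
    by (rule integrable_subinterval_real[OF \<psi>]) (use assms(3-5) in auto)
  show "\<psi> s \<in> closure \<Omega>O" if "s \<in> {a..b}" for s
    using fr assms(3-5) that by (auto simp: frontier_def)
qed (use assms(1,4) in \<open>auto simp: convex_closure\<close>)

lemma A_class_segment_in_closure:
  assumes "convex \<Omega>O" "\<psi> \<in> A_class \<Omega>O \<Omega>I" "t \<in> {0<..<1}"
  shows "closed_segment (avg {0..t} \<psi>) (avg {t..1} \<psi>) \<subseteq> closure \<Omega>O"
  using A_class_avg_in_closure[OF assms(1,2), of 0 t] A_class_avg_in_closure[OF assms(1,2), of t 1] assms
  by (intro closed_segment_subset) (auto simp: convex_closure)

section \<open>Intervals whose averages stay in a closed convex set\<close>

lemma sets_lebesgue_preimage_open:
  fixes \<psi> :: "real \<Rightarrow> 'a::euclidean_space"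
  assumes "\<psi> absolutely_integrable_on {0..1}" "S \<in> sets lebesgue" "S \<subseteq> {0..1}" "open U"
  shows "{s \<in> S. \<psi> s \<in> U} \<in> sets lebesgue"
proof -
  have "\<psi> \<in> borel_measurable (lebesgue_on {0..1})"
    using assms(1) by (simp add: absolutely_integrable_measurable)
  then have "\<psi> -` U \<inter> space (lebesgue_on {0..1}) \<in> sets (lebesgue_on {0..1})"
    by (rule measurable_sets) (simp add: assms(4))
  then have "\<psi> -` U \<inter> {0..1} \<in> sets lebesgue" by (simp add: sets_restrict_space_iff)
  moreover have "{s \<in> S. \<psi> s \<in> U} = S \<inter> (\<psi> -` U \<inter> {0..1})" using assms(3) by auto
  ultimately show ?thesis using assms(2) by auto
qed

lemma non_negligible_closed_subset:
  assumes S: "S \<in> sets lebesgue" "bounded S" "\<not> negligible S"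
  obtains T where "closed T" "T \<subseteq> S" "\<not> negligible T"
proof -
  have Slm: "S \<in> lmeasurable" by (rule bounded_set_imp_lmeasurable[OF S(2,1)])
  then have "measure lebesgue S > 0"
    using S(3) negligible_iff_measure0 measure_nonneg by (metis order_le_less)
  then obtain T where T: "closed T" "T \<subseteq> S" "S - T \<in> lmeasurable"
      "emeasure lebesgue (S - T) < ennreal (measure lebesgue S)"
    using sets_lebesgue_inner_closed[OF S(1)] by blast
  have "\<not> negligible T"
  proof
    assume "negligible T"
    then have "emeasure lebesgue (S - T) = emeasure lebesgue S"
      by (intro emeasure_Diff_null_set) (auto simp: negligible_iff_null_sets S(1))
    also have "\<dots> = ennreal (measure lebesgue S)" using Slm by (simp add: emeasure_eq_measure2)
    finally show False using T(4) by simp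
  qed
  then show ?thesis using that T by blast
qed

lemma integral_pos_on_non_negligible:
  fixes f :: "real \<Rightarrow> real"
  assumes f: "f absolutely_integrable_on {0..1}" and T: "closed T" "T \<subseteq> {0..1}" "\<not> negligible T"
    and \<delta>: "\<delta> > 0" "\<And>s. s \<in> T \<Longrightarrow> \<delta> \<le> f s"
  shows "0 < integral T f"
proof -
  have Tlm: "T \<in> lmeasurable"
    using T(1,2) by (intro lmeasurable_compact) (meson bounded_subset compact_eq_bounded_closed compact_Icc)
  have "integral T (\<lambda>s. \<delta> *\<^sub>R (1::real)) = \<delta> *\<^sub>R integral T (\<lambda>s. 1)" by (rule integral_cmul)
  then have "\<delta> * measure lebesgue T = integral T (\<lambda>s. \<delta>)" using lmeasure_integral[OF Tlm] by simp
  also have "\<dots> \<le> integral T f"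
    using \<delta>(2) by (rule_tac integral_le[OF integrable_on_const[OF Tlm] integral_grid_cells_tendsto(2)[OF f T(1,2)]])
  finally show ?thesis
    using T(3) Tlm \<delta>(1) negligible_iff_measure0 measure_nonneg
    by (smt (verit) mult_pos_pos)
qed

text \<open>Cover the complement of \<open>D\<close> by countably many balls with rational radii, centred in a
  countable dense set, whose closures avoid \<open>D\<close>.\<close>
lemma non_negligible_preimage_ball:
  fixes \<psi> :: "real \<Rightarrow> 'a::euclidean_space"
  assumes D: "closed D" and S: "\<not> negligible S" and out: "\<And>s. s \<in> S \<Longrightarrow> \<psi> s \<notin> D"
  obtains q r where "r > 0" "cball q r \<inter> D = {}" "\<not> negligible {s \<in> S. \<psi> s \<in> ball q r}"
proof -
  obtain Q :: "'a set" where Q: "countable Q" "\<And>X. open X \<Longrightarrow> X \<noteq> {} \<Longrightarrow> \<exists>d\<in>Q. d \<in> X"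
    using countable_dense_exists by blast
  define V where "V = {(q, r). q \<in> Q \<and> r \<in> (\<rat>::real set) \<and> r > 0 \<and> cball q r \<inter> D = {}}"
  have "countable V"
    by (rule countable_subset[of _ "Q \<times> \<rat>"]) (auto simp: V_def Q(1) countable_rat)
  define E where "E qr = {s \<in> S. \<psi> s \<in> ball (fst qr) (snd qr)}" for qr
  have "S \<subseteq> (\<Union>qr\<in>V. E qr)"
  proof
    fix s assume s: "s \<in> S"
    obtain e where e: "e > 0" "ball (\<psi> s) e \<subseteq> - D"
      using D out[OF s] open_contains_ball by (metis ComplI open_Compl)
    obtain q where q: "q \<in> Q" "dist (\<psi> s) q < e/4" using Q(2)[of "ball (\<psi> s) (e/4)"] e by auto
    obtain r where r: "r \<in> \<rat>" "e/4 < r" "r < e/2" using Rats_dense_in_real[of "e/4" "e/2"] e by auto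
    have "cball q r \<subseteq> ball (\<psi> s) e"
    proof
      fix x assume "x \<in> cball q r"
      then show "x \<in> ball (\<psi> s) e"
        using q r dist_triangle[of "\<psi> s" x q] by (simp add: dist_commute)
    qed
    then have "(q, r) \<in> V" using q r e by (auto simp: V_def)
    moreover have "s \<in> E (q, r)" using s q r by (auto simp: E_def dist_commute)
    ultimately show "s \<in> (\<Union>qr\<in>V. E qr)" by blast
  qed
  then obtain qr where "qr \<in> V" "\<not> negligible (E qr)"
    using S \<open>countable V\<close> negligible_countable_Union[of "E ` V"] negligible_subset by blast
  then show ?thesis using that by (auto simp: V_def E_def)
qed

lemma separate_closed_convex_from_ball:
  fixes D :: "'a::euclidean_space set"
  assumes D: "closed D" "convex D" and r: "r > 0" "cball q r \<inter> D = {}"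
  obtains a c \<delta> where "\<delta> > 0" "\<forall>x\<in>D. a \<bullet> x < c" "\<forall>y\<in>ball q r. \<delta> \<le> a \<bullet> y - c"
proof -
  obtain a c where ac: "\<forall>x\<in>D. a \<bullet> x < c" "\<forall>x\<in>cball q r. a \<bullet> x > c"
    using separating_hyperplane_closed_compact[OF D(2,1) convex_cball compact_cball, of q r] r by auto
  define w where "w = q - (r / norm a) *\<^sub>R a"
  have "dist q w \<le> r" using r by (cases "a = 0") (simp_all add: w_def)
  moreover have "a \<bullet> w = a \<bullet> q - r * norm a"
    by (cases "a = 0") (simp_all add: w_def inner_diff_right power2_norm_eq_inner[symmetric] power2_eq_square)
  ultimately have \<delta>: "a \<bullet> q - r * norm a - c > 0" using ac(2) by force
  have "a \<bullet> q - r * norm a - c \<le> a \<bullet> y - c" if "y \<in> ball q r" for y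
  proof -
    have "- (a \<bullet> (y - q)) \<le> norm a * norm (y - q)"
      using Cauchy_Schwarz_ineq2[of a "y - q"] by linarith
    also have "\<dots> \<le> norm a * r"
      using that by (intro mult_left_mono) (auto simp: dist_norm norm_minus_commute)
    finally show ?thesis by (simp add: inner_diff_right algebra_simps)
  qed
  then show ?thesis using that \<delta> ac(1) by blast
qed

lemma negligible_left_ends_avg_in_closed_convex:
  fixes \<psi> :: "real \<Rightarrow> 'a::euclidean_space"
  assumes \<psi>: "\<psi> absolutely_integrable_on {0..1}"
    and D: "closed D" "convex D" and out: "\<And>s. s \<in> {0..1} \<Longrightarrow> \<psi> s \<notin> D"
    and S: "S \<in> sets lebesgue" "S \<subseteq> {0..1}"
    and avg: "\<And>\<alpha> \<beta>. \<alpha> \<in> S \<Longrightarrow> \<alpha> < \<beta> \<Longrightarrow> \<beta> \<le> 1 \<Longrightarrow> avg {\<alpha>..\<beta>} \<psi> \<in> D"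
  shows "negligible S"
proof (rule ccontr)
  assume "\<not> negligible S"
  moreover have "\<psi> s \<notin> D" if "s \<in> S" for s using that S(2) out by blast
  ultimately obtain q r where qr: "r > 0" "cball q r \<inter> D = {}"
    and E: "\<not> negligible {s \<in> S. \<psi> s \<in> ball q r}"
    by (rule non_negligible_preimage_ball[OF D(1)])
  have meas: "{s \<in> S. \<psi> s \<in> ball q r} \<in> sets lebesgue"
    by (rule sets_lebesgue_preimage_open[OF \<psi> S]) simp
  have bdd: "bounded {s \<in> S. \<psi> s \<in> ball q r}"
    using S(2) bounded_subset[of "{0..1::real}" "{s \<in> S. \<psi> s \<in> ball q r}"] by auto
  obtain T where T: "closed T" "T \<subseteq> {s \<in> S. \<psi> s \<in> ball q r}" "\<not> negligible T"
    by (rule non_negligible_closed_subset[OF meas bdd E])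
  obtain a c \<delta> where ac: "\<delta> > 0" "\<forall>x\<in>D. a \<bullet> x < c" "\<forall>y\<in>ball q r. \<delta> \<le> a \<bullet> y - c"
    by (rule separate_closed_convex_from_ball[OF D qr])
  define f where "f s = a \<bullet> \<psi> s - c" for s
  have \<psi>i: "\<psi> integrable_on {0..1}" using \<psi> by (simp add: absolutely_integrable_on_def)
  have fi: "f absolutely_integrable_on {0..1}"
    unfolding f_def using absolutely_integrable_linear[OF \<psi> bounded_linear_inner_right]
    by (intro set_integral_diff(1)) (auto simp: o_def)
  have T01: "T \<subseteq> {0..1}" using T(2) S(2) by auto
  text \<open>All averages starting in \<open>T\<close> lie in \<open>D\<close>, below the hyperplane, while \<open>\<psi>\<close> lies above it on \<open>T\<close>.\<close>
  have "integral {x..y} f \<le> 0" if "x \<in> T \<union> {1}" "y \<in> T \<union> {1}" "x \<le> y" for x y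
  proof (cases "x = y")
    case False
    then have xy: "x \<in> S" "x < y" "y \<le> 1" using that T(2) T01 by auto
    have "\<psi> integrable_on {x..y}" using xy S(2) by (intro integrable_subinterval_real[OF \<psi>i]) auto
    then have "integral {x..y} f = (y - x) * (a \<bullet> avg {x..y} \<psi> - c)"
      unfolding f_def using xy(2) by (rule integral_inner_minus_const)
    moreover have "a \<bullet> avg {x..y} \<psi> - c < 0" using ac(2) avg[OF xy] by simp
    ultimately show ?thesis using xy(2) by (simp add: mult_nonneg_nonpos)
  qed simp
  then have "integral (T \<union> {1}) f \<le> 0"
    using T(1) T01 by (rule_tac integral_closed_nonpos[OF fi]) auto
  moreover have "integral (T \<union> {1}) f = integral T f"
    by (rule integral_spike_set) (auto intro: negligible_subset[of "{1::real}"])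
  moreover have "0 < integral T f"
    by (rule integral_pos_on_non_negligible[OF fi T(1) T01 T(3) ac(1)]) (use ac(3) T(2) in \<open>auto simp: f_def\<close>)
  ultimately show False by linarith
qed

section \<open>Geometry of the inner convex hull\<close>

lemma standing_assumptionsD:
  assumes "standing_assumptions \<Omega>O \<Omega>I"
  shows "open \<Omega>O" "convex \<Omega>O" "closed \<Omega>I" "closure (convex hull \<Omega>I) \<subseteq> \<Omega>O"
    "\<And>\<omega>. \<omega> \<in> components (interior (convex hull \<Omega>I) - \<Omega>I) \<Longrightarrow>
       \<exists>L. supporting_hyperplane (convex hull \<Omega>I) L \<and> frontier \<omega> - \<Omega>I \<subseteq> L"
  using assms unfolding standing_assumptions_def strictly_convex_def by blast+

lemma inner_closed_segment_bounds:
  assumes "z \<in> closed_segment p q"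
  shows "min (v \<bullet> p) (v \<bullet> q) \<le> v \<bullet> z" "v \<bullet> z \<le> max (v \<bullet> p) (v \<bullet> q)"
proof -
  obtain u where u: "0 \<le> u" "u \<le> 1" "z = (1 - u) *\<^sub>R p + u *\<^sub>R q"
    using assms by (auto simp: closed_segment_def)
  then have "v \<bullet> z = (1 - u) * (v \<bullet> p) + u * (v \<bullet> q)" by (simp add: inner_add_right)
  moreover have "(1 - u) * min (v \<bullet> p) (v \<bullet> q) + u * min (v \<bullet> p) (v \<bullet> q) \<le> (1 - u) * (v \<bullet> p) + u * (v \<bullet> q)"
    and "(1 - u) * (v \<bullet> p) + u * (v \<bullet> q) \<le> (1 - u) * max (v \<bullet> p) (v \<bullet> q) + u * max (v \<bullet> p) (v \<bullet> q)"
    using u by (intro add_mono mult_left_mono; simp)+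
  ultimately show "min (v \<bullet> p) (v \<bullet> q) \<le> v \<bullet> z" "v \<bullet> z \<le> max (v \<bullet> p) (v \<bullet> q)"
    by (simp_all add: algebra_simps)
qed

lemma inner_less_on_open:
  fixes v :: "'a::euclidean_space"
  assumes "open K" "v \<noteq> 0" "\<forall>k\<in>K. v \<bullet> k \<le> c" "y \<in> K"
  shows "v \<bullet> y < c"
proof -
  obtain e where e: "e > 0" "ball y e \<subseteq> K" using assms open_contains_ball by blast
  define z where "z = y + (e / 2 / norm v) *\<^sub>R v"
  have "dist y z = e / 2" using assms(2) e by (simp add: z_def dist_norm)
  then have "z \<in> K" using e by auto
  then have "v \<bullet> z \<le> c" using assms by blast
  moreover have "v \<bullet> z = v \<bullet> y + e / 2 * norm v"
    using assms(2) by (simp add: z_def inner_add_right power2_norm_eq_inner[symmetric] power2_eq_square)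
  moreover have "e / 2 * norm v > 0" using e assms(2) by simp
  ultimately show ?thesis by linarith
qed

lemma connected_subset_of_frontier_in_hyperplane:
  assumes "connected P" "P \<inter> \<omega> \<noteq> {}" "frontier \<omega> - X \<subseteq> {x. v \<bullet> x = b}" "P \<inter> X = {}"
    "\<forall>p\<in>P. v \<bullet> p < b"
  shows "P \<subseteq> \<omega>"
proof (rule ccontr)
  assume "\<not> P \<subseteq> \<omega>"
  then obtain z where "z \<in> P" "z \<in> frontier \<omega>"
    using connected_Int_frontier[OF assms(1,2)] by blast
  then show False using assms(3-5) by fastforce
qed

lemma component_with_supporting_hyperplane:
  fixes \<Omega>O \<Omega>I :: "'a::euclidean_space set"
  assumes SA: "standing_assumptions \<Omega>O \<Omega>I"
  defines "K \<equiv> interior (convex hull \<Omega>I)"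
  assumes y0: "y0 \<in> K" and x0: "x0 \<notin> K" and seg: "closed_segment y0 x0 \<inter> \<Omega>I = {}"
  obtains \<omega> v b where "y0 \<in> \<omega>" "\<omega> \<subseteq> K - \<Omega>I" "frontier \<omega> - \<Omega>I \<subseteq> {x. v \<bullet> x = b}"
    "\<forall>y\<in>K. v \<bullet> y < b" "b \<le> v \<bullet> x0"
proof -
  define \<omega> where "\<omega> = connected_component_set (K - \<Omega>I) y0"
  have y0\<omega>: "y0 \<in> \<omega>" using y0 seg by (auto simp: \<omega>_def)
  then have "\<omega> \<in> components (K - \<Omega>I)" unfolding \<omega>_def by (intro componentsI) auto
  then obtain L where L: "supporting_hyperplane (convex hull \<Omega>I) L" "frontier \<omega> - \<Omega>I \<subseteq> L"
    using standing_assumptionsD(5)[OF SA] unfolding K_def by blast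
  then obtain v b where vb: "v \<noteq> 0" "L = {x. v \<bullet> x = b}" "\<forall>y\<in>convex hull \<Omega>I. v \<bullet> y \<le> b"
    unfolding supporting_hyperplane_def by blast
  have K: "\<forall>y\<in>K. v \<bullet> y < b"
    using inner_less_on_open[of K v b] vb interior_subset[of "convex hull \<Omega>I"] by (auto simp: K_def)
  have \<omega>: "\<omega> \<subseteq> K - \<Omega>I" unfolding \<omega>_def by (rule connected_component_subset)
  have "closed_segment y0 x0 - \<omega> \<noteq> {}" using x0 \<omega> by auto
  then obtain z where z: "z \<in> closed_segment y0 x0" "z \<in> frontier \<omega>"
    using connected_Int_frontier[OF connected_segment, of y0 x0 \<omega>] y0\<omega> by blast
  then have "v \<bullet> z = b" using seg L(2) vb(2) by auto
  then have "b \<le> v \<bullet> x0"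
    using inner_closed_segment_bounds(2)[OF z(1), of v] K y0 by (auto simp: max_def split: if_splits)
  then show ?thesis using that y0\<omega> \<omega> L(2) vb(2) K by blast
qed

text \<open>Separate \<open>x0\<close> from \<open>K\<close> by a functional \<open>v\<close>. Since \<open>x0\<close> is a fixed convex combination of
  \<open>L t\<close> and \<open>R t\<close>, exactly one of them lies strictly above \<open>x0\<close> in the direction \<open>v\<close>, and the
  segment can only reach \<open>K\<close> on the part joining \<open>x0\<close> to the other one. By continuity the side
  does not depend on \<open>t\<close>.\<close>
lemma segments_meet_open_convex_on_fixed_side:
  fixes L R :: "real \<Rightarrow> 'a::euclidean_space"
  assumes K: "convex K" "open K" "x0 \<notin> K" and L: "continuous_on {0<..<1} L"
    and comb: "\<And>t. t \<in> {0<..<1} \<Longrightarrow> x0 = t *\<^sub>R L t + (1 - t) *\<^sub>R R t"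
    and hit: "\<And>t. t \<in> {0<..<1} \<Longrightarrow> closed_segment (L t) (R t) \<inter> K \<noteq> {}"
  shows "(\<forall>t\<in>{0<..<1}. closed_segment x0 (R t) \<inter> K \<noteq> {}) \<or> (\<forall>t\<in>{0<..<1}. closed_segment x0 (L t) \<inter> K \<noteq> {})"
proof -
  have "K \<noteq> {}" using hit[of "1/2"] by auto
  then obtain v c where "v \<noteq> 0" "\<forall>x\<in>K. v \<bullet> x \<le> c" "c \<le> v \<bullet> x0"
    using separating_hyperplane_sets[of K "{x0}"] K by auto
  then have below: "v \<bullet> y < v \<bullet> x0" if "y \<in> K" for y
    using inner_less_on_open[OF K(2), of v c y] that by fastforce
  define \<phi> where "\<phi> t = v \<bullet> L t - v \<bullet> x0" for t
  have sides: "t * \<phi> t + (1 - t) * (v \<bullet> R t - v \<bullet> x0) = 0" if "t \<in> {0<..<1}" for t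
    using arg_cong[OF comb[OF that], of "inner v"] by (simp add: \<phi>_def inner_add_right algebra_simps)
  have split: "closed_segment (L t) (R t) = closed_segment (L t) x0 \<union> closed_segment x0 (R t)"
    if "t \<in> {0<..<1}" for t
  proof -
    have "x0 = (1 - (1 - t)) *\<^sub>R L t + (1 - t) *\<^sub>R R t" using comb[OF that] by simp
    then have "x0 \<in> closed_segment (L t) (R t)"
      using that unfolding closed_segment_def by (intro CollectI exI[of _ "1 - t"]) auto
    then show ?thesis by (simp add: Un_closed_segment)
  qed
  have miss: "closed_segment x0 p \<inter> K = {}" if "v \<bullet> x0 \<le> v \<bullet> p" for p
    using inner_closed_segment_bounds(1)[of _ x0 p v] below that by (fastforce simp: min_def)
  have right: "closed_segment x0 (R t) \<inter> K \<noteq> {}" if "t \<in> {0<..<1}" "\<phi> t > 0" for t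
    using hit[of t] split[of t] miss[of "L t"] that by (auto simp: \<phi>_def closed_segment_commute)
  have left: "closed_segment x0 (L t) \<inter> K \<noteq> {}" if t: "t \<in> {0<..<1}" "\<phi> t < 0" for t
  proof -
    have "v \<bullet> x0 \<le> v \<bullet> R t" using sides[OF t(1)] t by (smt (verit) greaterThanLessThan_iff mult_pos_neg mult_pos_pos)
    then show ?thesis using hit[of t] split[of t] miss[of "R t"] t(1) by (auto simp: closed_segment_commute)
  qed
  have nonzero: "\<phi> t \<noteq> 0" if "t \<in> {0<..<1}" for t
  proof
    assume "\<phi> t = 0"
    then have "v \<bullet> x0 \<le> v \<bullet> L t" "v \<bullet> x0 \<le> v \<bullet> R t" using sides[OF that] that by (auto simp: \<phi>_def)
    then have "closed_segment x0 (L t) \<inter> K = {}" "closed_segment x0 (R t) \<inter> K = {}" using miss by auto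
    then show False using hit[OF that] split[OF that] by (auto simp: closed_segment_commute)
  qed
  have "connected (\<phi> ` {0<..<1})"
    unfolding \<phi>_def by (intro connected_continuous_image continuous_intros L) simp
  have "(\<forall>t\<in>{0<..<1}. \<phi> t > 0) \<or> (\<forall>t\<in>{0<..<1}. \<phi> t < 0)"
  proof (rule ccontr)
    assume "\<not> ?thesis"
    then obtain t1 t2 where "t1 \<in> {0<..<1}" "t2 \<in> {0<..<1}" "\<phi> t1 < 0" "\<phi> t2 > 0"
      using nonzero by (meson linorder_neqE_linordered_idom)
    then have "0 \<in> \<phi> ` {0<..<1}"
      using connectedD_interval[OF \<open>connected (\<phi> ` {0<..<1})\<close>, of "\<phi> t1" "\<phi> t2" 0] by auto
    then show False using nonzero by auto
  qed
  then show ?thesis using left right by blast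
qed

section \<open>Segments through the total average\<close>

lemma short_tail_segment_avoids_closed:
  fixes \<psi> :: "real \<Rightarrow> 'a::euclidean_space"
  assumes \<psi>: "\<psi> integrable_on {0..1}" and X: "closed X" "avg {0..1} \<psi> \<notin> X"
  obtains t where "t \<in> {0<..<1}" "closed_segment (avg {0..1} \<psi>) (avg {t..1} \<psi>) \<inter> X = {}"
proof -
  let ?R = "\<lambda>t. avg {t..1} \<psi>"
  obtain e where e: "e > 0" "ball (?R 0) e \<subseteq> - X"
    using X open_contains_ball[of "- X"] by auto
  obtain d where d: "d > 0" "\<And>t. t \<in> {0..<1} \<Longrightarrow> dist t 0 < d \<Longrightarrow> dist (?R t) (?R 0) < e"
    using continuous_on_avg_left_end[OF \<psi>] e(1) unfolding continuous_on_iff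
    by (metis atLeastLessThan_iff zero_less_one order_refl)
  define t where "t = min (d/2) (1/2)"
  have t: "t \<in> {0<..<1}" using d(1) by (auto simp: t_def)
  have "?R t \<in> ball (?R 0) e" using d(2)[of t] t d(1) by (auto simp: t_def dist_commute)
  then have "closed_segment (?R 0) (?R t) \<subseteq> ball (?R 0) e"
    by (intro closed_segment_subset) (use e in auto)
  then show ?thesis using that t e(2) by blast
qed

lemma tail_averages_in_component:
  fixes \<Omega>O \<Omega>I :: "'a::euclidean_space set" and \<psi> :: "real \<Rightarrow> 'a"
  assumes SA: "standing_assumptions \<Omega>O \<Omega>I" and \<psi>A: "\<psi> \<in> A_class \<Omega>O \<Omega>I"
  defines "K \<equiv> interior (convex hull \<Omega>I)" and "x0 \<equiv> avg {0..1} \<psi>"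
  assumes x0: "x0 \<notin> K" and hit: "\<And>t. t \<in> {0<..<1} \<Longrightarrow> closed_segment x0 (avg {t..1} \<psi>) \<inter> K \<noteq> {}"
  obtains \<omega> v b where "\<omega> \<subseteq> K - \<Omega>I" "frontier \<omega> - \<Omega>I \<subseteq> {x. v \<bullet> x = b}" "\<forall>y\<in>K. v \<bullet> y < b"
    "b \<le> v \<bullet> x0" "\<forall>t\<in>{0<..<1}. avg {t..1} \<psi> \<in> \<omega>"
proof -
  let ?R = "\<lambda>t. avg {t..1} \<psi>"
  have \<psi>i: "\<psi> integrable_on {0..1}" and avg_out: "\<And>a b. 0 \<le> a \<Longrightarrow> a < b \<Longrightarrow> b \<le> 1 \<Longrightarrow> avg {a..b} \<psi> \<notin> \<Omega>I"
    using \<psi>A by (auto simp: A_class_def absolutely_integrable_on_def)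
  have Rc: "continuous_on {0..<1} ?R" by (rule continuous_on_avg_left_end[OF \<psi>i])
  obtain t0 where t0: "t0 \<in> {0<..<1}" and seg: "closed_segment x0 (?R t0) \<inter> \<Omega>I = {}"
    using short_tail_segment_avoids_closed[OF \<psi>i standing_assumptionsD(3)[OF SA]] avg_out[of 0 1]
    unfolding x0_def by auto
  obtain y0 where y0: "y0 \<in> K" "y0 \<in> closed_segment x0 (?R t0)" using hit[OF t0] by blast
  have sub: "closed_segment y0 p \<subseteq> closed_segment x0 (?R t0)" if "p \<in> {x0, ?R t0}" for p
    using that y0(2) by (intro closed_segment_subset) auto
  then have "closed_segment y0 x0 \<inter> \<Omega>I = {}" using seg by blast
  from component_with_supporting_hyperplane[OF SA y0(1)[unfolded K_def] x0[unfolded K_def] this]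
  obtain \<omega> v b where \<omega>: "y0 \<in> \<omega>" "\<omega> \<subseteq> K - \<Omega>I" "frontier \<omega> - \<Omega>I \<subseteq> {x. v \<bullet> x = b}"
    and K: "\<forall>y\<in>K. v \<bullet> y < b" and b: "b \<le> v \<bullet> x0"
    unfolding K_def by blast
  text \<open>Each segment from \<open>x0\<close> to a tail average enters \<open>K\<close>, where \<open>v\<close> is below \<open>b \<le> v \<bullet> x0\<close>.\<close>
  have R_below: "v \<bullet> ?R t < b" if t: "t \<in> {0<..<1}" for t
  proof -
    obtain y where "y \<in> K" "y \<in> closed_segment x0 (?R t)" using hit[OF t] by blast
    then show ?thesis
      using inner_closed_segment_bounds(1)[of y x0 "?R t" v] K b by (auto simp: min_def split: if_splits)
  qed
  have "closed_segment y0 (?R t0) \<subseteq> \<omega>"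
  proof (rule connected_subset_of_frontier_in_hyperplane[OF connected_segment _ \<omega>(3)])
    show "closed_segment y0 (?R t0) \<inter> \<Omega>I = {}" using sub seg by blast
    show "\<forall>p\<in>closed_segment y0 (?R t0). v \<bullet> p < b"
    proof
      fix p assume "p \<in> closed_segment y0 (?R t0)"
      then have "v \<bullet> p \<le> max (v \<bullet> y0) (v \<bullet> ?R t0)" by (rule inner_closed_segment_bounds(2))
      moreover have "v \<bullet> y0 < b" using K y0(1) by blast
      ultimately show "v \<bullet> p < b" using R_below[OF t0] by (simp add: max_def split: if_splits)
    qed
  qed (use \<omega>(1) in auto)
  then have Rt0\<omega>: "?R t0 \<in> \<omega>" by auto
  have "?R ` {0<..<1} \<subseteq> \<omega>"
  proof (rule connected_subset_of_frontier_in_hyperplane[OF _ _ \<omega>(3)])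
    show "connected (?R ` {0<..<1})"
      by (rule connected_continuous_image[OF continuous_on_subset[OF Rc]]) auto
    show "?R ` {0<..<1} \<inter> \<omega> \<noteq> {}" using Rt0\<omega> t0 by blast
    show "?R ` {0<..<1} \<inter> \<Omega>I = {}" using avg_out[of _ 1] by force
    show "\<forall>p\<in>?R ` {0<..<1}. v \<bullet> p < b" using R_below by blast
  qed
  then show ?thesis by (intro that[OF \<omega>(2,3) K b]) blast
qed

lemma averages_from_left_end_in_component:
  fixes \<psi> :: "real \<Rightarrow> 'a::euclidean_space"
  assumes \<psi>: "\<psi> integrable_on {0..1}" and \<alpha>: "0 \<le> \<alpha>" "\<alpha> < 1"
    and \<omega>: "frontier \<omega> - X \<subseteq> {x. v \<bullet> x = b}" "avg {\<alpha>..1} \<psi> \<in> \<omega>"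
    and out: "\<And>u. u \<in> {\<alpha><..1} \<Longrightarrow> avg {\<alpha>..u} \<psi> \<notin> X"
    and below: "\<And>u. u \<in> {\<alpha><..1} \<Longrightarrow> v \<bullet> avg {\<alpha>..u} \<psi> < b"
    and \<beta>: "\<beta> \<in> {\<alpha><..1}"
  shows "avg {\<alpha>..\<beta>} \<psi> \<in> \<omega>"
proof -
  have "(\<lambda>u. avg {\<alpha>..u} \<psi>) ` {\<alpha><..1} \<subseteq> \<omega>"
  proof (rule connected_subset_of_frontier_in_hyperplane[OF _ _ \<omega>(1)])
    show "connected ((\<lambda>u. avg {\<alpha>..u} \<psi>) ` {\<alpha><..1})"
      using \<alpha> by (intro connected_continuous_image continuous_on_avg_right_end[OF \<psi>]) auto
    show "(\<lambda>u. avg {\<alpha>..u} \<psi>) ` {\<alpha><..1} \<inter> \<omega> \<noteq> {}" using \<omega>(2) \<alpha> by force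
  qed (use out below in auto)
  then show ?thesis using \<beta> by blast
qed

lemma tail_segment_avoids_interior:
  fixes \<Omega>O \<Omega>I :: "'a::euclidean_space set" and \<psi> :: "real \<Rightarrow> 'a"
  assumes SA: "standing_assumptions \<Omega>O \<Omega>I" and \<psi>A: "\<psi> \<in> A_class \<Omega>O \<Omega>I"
    and x0: "avg {0..1} \<psi> \<notin> interior (convex hull \<Omega>I)"
  shows "\<exists>t\<in>{0<..<1}. closed_segment (avg {0..1} \<psi>) (avg {t..1} \<psi>) \<inter> interior (convex hull \<Omega>I) = {}"
proof (rule ccontr)
  let ?C = "convex hull \<Omega>I"
  assume "\<not> ?thesis"
  then have "closed_segment (avg {0..1} \<psi>) (avg {t..1} \<psi>) \<inter> interior ?C \<noteq> {}"
    if "t \<in> {0<..<1}" for t using that by blast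
  then obtain \<omega> v b where \<omega>: "\<omega> \<subseteq> interior ?C - \<Omega>I" "frontier \<omega> - \<Omega>I \<subseteq> {x. v \<bullet> x = b}"
    and K: "\<forall>y\<in>interior ?C. v \<bullet> y < b" and b: "b \<le> v \<bullet> avg {0..1} \<psi>"
    and tail: "\<forall>t\<in>{0<..<1}. avg {t..1} \<psi> \<in> \<omega>"
    using tail_averages_in_component[OF SA \<psi>A x0] by blast
  have \<psi>: "\<psi> absolutely_integrable_on {0..1}" and fr: "\<And>s. s \<in> {0..1} \<Longrightarrow> \<psi> s \<in> frontier \<Omega>O"
    and avg_out: "\<And>a b. 0 \<le> a \<Longrightarrow> a < b \<Longrightarrow> b \<le> 1 \<Longrightarrow> avg {a..b} \<psi> \<notin> \<Omega>I"
    using \<psi>A by (auto simp: A_class_def)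
  have \<psi>i: "\<psi> integrable_on {0..1}" using \<psi> by (simp add: absolutely_integrable_on_def)
  define h where "h s = v \<bullet> \<psi> s - b" for s
  have hi: "h absolutely_integrable_on {0..1}"
    unfolding h_def using absolutely_integrable_linear[OF \<psi> bounded_linear_inner_right]
    by (intro set_integral_diff(1)) (auto simp: o_def)
  note int_h = integral_primitive_inner_minus_const[OF \<psi>i, of _ _ v b, folded h_def]
  have "avg {1/2..1} \<psi> \<in> interior ?C" using tail \<omega>(1) by auto
  then have "v \<bullet> avg {1/2..1} \<psi> < b" using K by blast
  then have lt: "integral {0..1} h < integral {0..1/2} h" using int_h[of "1/2" 1] by simp
  have h01: "0 \<le> integral {0..1} h" using int_h[of 0 1] b by simp
  obtain S where S: "S \<in> sets lebesgue" "S \<subseteq> {0<..<1}" "\<not> negligible S"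
    and records: "\<And>\<alpha> u. \<alpha> \<in> S \<Longrightarrow> u \<in> {\<alpha><..1} \<Longrightarrow> integral {0..u} h < integral {0..\<alpha>} h"
    by (rule non_negligible_strict_right_records[OF hi h01 _ lt]) auto
  have "avg {\<alpha>..\<beta>} \<psi> \<in> \<omega>" if \<alpha>: "\<alpha> \<in> S" and \<beta>: "\<beta> \<in> {\<alpha><..1}" for \<alpha> \<beta>
  proof (rule averages_from_left_end_in_component[OF \<psi>i _ _ \<omega>(2) _ _ _ \<beta>])
    have \<alpha>01: "\<alpha> \<in> {0<..<1}" using \<alpha> S(2) by auto
    then show "0 \<le> \<alpha>" "\<alpha> < 1" "avg {\<alpha>..1} \<psi> \<in> \<omega>" using tail by auto
    show "avg {\<alpha>..u} \<psi> \<notin> \<Omega>I" if "u \<in> {\<alpha><..1}" for u using avg_out \<alpha>01 that by auto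
    show "v \<bullet> avg {\<alpha>..u} \<psi> < b" if u: "u \<in> {\<alpha><..1}" for u
    proof -
      have "(u - \<alpha>) * (v \<bullet> avg {\<alpha>..u} \<psi> - b) < 0"
        using int_h[of \<alpha> u] records[OF \<alpha> u] \<alpha>01 u by simp
      then show ?thesis using u by (simp add: mult_less_0_iff)
    qed
  qed
  then have "avg {\<alpha>..\<beta>} \<psi> \<in> closure ?C" if "\<alpha> \<in> S" "\<beta> \<in> {\<alpha><..1}" for \<alpha> \<beta>
    using that \<omega>(1) interior_subset[of ?C] closure_subset[of ?C] by blast
  moreover have "\<psi> s \<notin> closure ?C" if "s \<in> {0..1}" for s
    using fr[OF that] standing_assumptionsD(1,4)[OF SA] by (auto simp: frontier_def interior_open)
  ultimately have "negligible S"
    using S(1,2) by (intro negligible_left_ends_avg_in_closed_convex[OF \<psi>, of "closure ?C"])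
      (auto simp: convex_closure)
  then show False using S(3) by blast
qed

lemma head_segment_avoids_interior:
  fixes \<Omega>O \<Omega>I :: "'a::euclidean_space set" and \<psi> :: "real \<Rightarrow> 'a"
  assumes SA: "standing_assumptions \<Omega>O \<Omega>I" and \<psi>A: "\<psi> \<in> A_class \<Omega>O \<Omega>I"
    and x0: "avg {0..1} \<psi> \<notin> interior (convex hull \<Omega>I)"
  shows "\<exists>t\<in>{0<..<1}. closed_segment (avg {0..1} \<psi>) (avg {0..t} \<psi>) \<inter> interior (convex hull \<Omega>I) = {}"
proof -
  let ?\<psi>' = "\<lambda>s. \<psi> (1 - s)"
  have \<psi>: "\<psi> integrable_on {0..1}" using \<psi>A by (simp add: A_class_def absolutely_integrable_on_def)
  have x0': "avg {0..1} ?\<psi>' = avg {0..1} \<psi>" using avg_reflect[OF \<psi>, of 0 1] by simp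
  then obtain t where t: "t \<in> {0<..<1}"
    "closed_segment (avg {0..1} \<psi>) (avg {t..1} ?\<psi>') \<inter> interior (convex hull \<Omega>I) = {}"
    using tail_segment_avoids_interior[OF SA A_class_reflect[OF \<psi>A]] x0 by auto
  moreover have "avg {t..1} ?\<psi>' = avg {0..1 - t} \<psi>" using avg_reflect[OF \<psi>, of t 1] t(1) by simp
  ultimately show ?thesis by (intro bexI[of _ "1 - t"]) auto
qed

theorem mainTheorem9:
  fixes \<Omega>O \<Omega>I :: "'a::euclidean_space set" and \<psi> :: "real \<Rightarrow> 'a"
  assumes "standing_assumptions \<Omega>O \<Omega>I"
    and "\<psi> \<in> A_class \<Omega>O \<Omega>I"
    and "avg {0..1} \<psi> \<notin> interior (convex hull \<Omega>I)"
  shows "\<exists>t. 0 < t \<and> t < 1 \<and>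
    closed_segment (avg {0..t} \<psi>) (avg {t..1} \<psi>)
      \<subseteq> closure \<Omega>O - interior (convex hull \<Omega>I)"
proof (rule ccontr)
  let ?K = "interior (convex hull \<Omega>I)"
  assume contra: "\<not> ?thesis"
  have \<psi>: "\<psi> integrable_on {0..1}" using assms(2) by (simp add: A_class_def absolutely_integrable_on_def)
  have hit: "closed_segment (avg {0..t} \<psi>) (avg {t..1} \<psi>) \<inter> ?K \<noteq> {}" if t: "t \<in> {0<..<1}" for t
  proof
    assume "closed_segment (avg {0..t} \<psi>) (avg {t..1} \<psi>) \<inter> ?K = {}"
    then have "closed_segment (avg {0..t} \<psi>) (avg {t..1} \<psi>) \<subseteq> closure \<Omega>O - ?K"
      using A_class_segment_in_closure[OF standing_assumptionsD(2)[OF assms(1)] assms(2) t] by blast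
    then show False using contra t by auto
  qed
  have "continuous_on {0<..<1} (\<lambda>t. avg {0..t} \<psi>)"
    by (rule continuous_on_subset[OF continuous_on_avg_right_end[OF \<psi> order_refl]]) auto
  from segments_meet_open_convex_on_fixed_side[OF convex_interior[OF convex_convex_hull] open_interior
      assms(3) this avg_split[OF \<psi>] hit]
  show False
    using tail_segment_avoids_interior[OF assms] head_segment_avoids_interior[OF assms] by blast
qed

end
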